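(* Consider the two-dimensional forward Euler finite difference scheme $\mathbf{u}_{ij}^{n+1}=\mathbf{u}_{ij}^n-\lambda^x(\mathbf{f}_{i+1/2,j}-\mathbf{f}_{i-1/2,j})-\lambda^y(\mathbf{g}_{i,j+1/2}-\mathbf{g}_{i,j-1/2})$, $\lambda^x=\Delta t/\Delta x$, $\lambda^y=\Delta t/\Delta y$, with numerical fluxes $\mathbf{f}_{i+1/2,j}=\alpha^x_{i+1/2,j}(\mathbf{w}^{x,+}_{i+1/2,j}-\mathbf{w}^{x,-}_{i+1/2,j})$ and $\mathbf{g}_{i,j+1/2}=\alpha^y_{i,j+1/2}(\mathbf{w}^{y,+}_{i,j+1/2}-\mathbf{w}^{y,-}_{i,j+1/2})$, where $\mathbf{w}^{x,\pm}_{i+1/2,j},\mathbf{w}^{y,\pm}_{i,j+1/2}\in\mathbb{R}^6$ are given interface values, $\alpha^x_{i+1/2,j}=\max\{\alpha^x(\mathbf{u}^n_{ij}),\alpha^x(\mathbf{u}^n_{i+1,j})\}$, $\alpha^y_{i,j+1/2}=\max\{\alpha^y(\mathbf{u}^n_{ij}),\alpha^y(\mathbf{u}^n_{i,j+1})\}$. Let $\mathbf{w}^{x,\pm}_{ij}=\mathbf{w}^{x,\pm}(\mathbf{u}^n_{ij})$, $\mathbf{w}^{y,\pm}_{ij}=\mathbf{w}^{y,\pm}(\mathbf{u}^n_{ij})$, and $\mathbf{q}^{x,+,*}_{ij}=\frac{1}{1-\hat w_N}(\mathbf{w}^{x,+}_{ij}-\hat w_N\mathbf{w}^{x,+}_{i+1/2,j})$,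 $\mathbf{q}^{x,-,*}_{ij}=\frac{1}{1-\hat w_1}(\mathbf{w}^{x,-}_{ij}-\hat w_1\mathbf{w}^{x,-}_{i-1/2,j})$, $\mathbf{q}^{y,+,*}_{ij}=\frac{1}{1-\hat w_N}(\mathbf{w}^{y,+}_{ij}-\hat w_N\mathbf{w}^{y,+}_{i,j+1/2})$, $\mathbf{q}^{y,-,*}_{ij}=\frac{1}{1-\hat w_1}(\mathbf{w}^{y,-}_{ij}-\hat w_1\mathbf{w}^{y,-}_{i,j-1/2})$. Assume that for all $i,j$: (1) $\mathbf{u}^n_{ij}\in\mathbb{U}_{\mathrm{ad}}$; (2) $\mathbf{q}^{x,\pm,*}_{ij}\in\mathbb{U}_{\mathrm{ad}}$ and $\mathbf{w}^{x,\pm}_{i+1/2,j}\in\mathbb{U}_{\mathrm{ad}}$; (3) $\mathbf{q}^{y,\pm,*}_{ij}\in\mathbb{U}_{\mathrm{ad}}$ and $\mathbf{w}^{y,\pm}_{i,j+1/2}\in\mathbb{U}_{\mathrm{ad}}$. Then the scheme is positivity preserving, i.e. $\mathbf{u}^{n+1}_{ij}\in\mathbb{U}_{\mathrm{ad}}$ for all $i,j$, provided $\left(\frac{\alpha^x}{\Delta x}+\frac{\alpha^y}{\Delta y}\right)\Delta t\le\hat w_1$, where $\alpha^x=\max_{i,j}\alpha^x(\mathbf{u}^n_{ij})$ and $\alpha^y=\max_{i,j}\alpha^y(\mathbf{u}^n_{ij})$.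
   Context: Ten-Moment equations in 2-D: conservative variable $\mathbf{u}=(\rho,\rho v_1,\rho v_2,E_{11},E_{12},E_{22})^\top$; pressure components $p_{11}=2E_{11}-\rho v_1^2$, $p_{12}=2E_{12}-\rho v_1v_2$, $p_{22}=2E_{22}-\rho v_2^2$; $\mathbb{U}_{\mathrm{ad}}=\{\mathbf{u}:\rho>0,\ \mathbf{p}\text{ positive definite}\}$. Fluxes: $\mathbf{f}(\mathbf{u})=\big(\rho v_1,\ \rho v_1^2+p_{11},\ \rho v_1v_2+p_{12},\ (E_{11}+p_{11})v_1,\ E_{12}v_1+\tfrac12(p_{11}v_2+p_{12}v_1),\ E_{22}v_1+p_{12}v_2\big)^\top$ and $\mathbf{g}(\mathbf{u})=\big(\rho v_2,\ \rho v_1v_2+p_{12},\ \rho v_2^2+p_{22},\ E_{11}v_2+p_{12}v_1,\ E_{12}v_2+\tfrac12(p_{12}v_2+p_{22}v_1),\ (E_{22}+p_{22})v_2\big)^\top$. Wave speeds $\alpha^x(\mathbf{u})=|v_1|+\sqrt{3p_{11}/\rho}$, $\alpha^y(\mathbf{u})=|v_2|+\sqrt{3p_{22}/\rho}$. $\mathbf{w}^{x,\pm}(\mathbf{u})=\frac12(\mathbf{u}\pm\mathbf{f}(\mathbf{u})/\alpha^x(\mathbf{u}))$, $\mathbf{w}^{y,\pm}(\mathbf{u})=\frac12(\mathbf{u}\pm\mathbf{g}(\mathbf{u})/\alpha^y(\mathbf{u}))$. Uniform rectangular mesh with nodes $(x_i,y_j)$, spacings $\Delta x,\Delta y$. $\hat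 w_1,\dots,\hat w_N$ are the normalized weights of the $N$-point Gauss–Lobatto rule with $N\ge4$, so $\hat w_1=\hat w_N$ (for $N=4$, $\hat w_1=1/12$). In the paper the interface values are $\mathbf{w}^{x,\pm}_{i+1/2,j}=\pm\mathbf{f}^\pm_{i+1/2,j}/\alpha^x_{i+1/2,j}$ with $\mathbf{f}^\pm_{i+1/2,j}$ WENO reconstructions of the split fluxes $\frac12(\mathbf{f}(\mathbf{u})\pm\alpha^x_{i+1/2,j}\mathbf{u})$ (similarly in $y$), possibly modified by a scaling limiter. *)

theory Defs
  imports "HOL-Analysis.Analysis"
begin

type_synonym state = "real ^ 6"

text \<open>Conservative variables u = (rho, rho v1, rho v2, E11, E12, E22).\<close>
definition rho :: "state \<Rightarrow> real" where "rho u = u $ 1"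
definition vel1 :: "state \<Rightarrow> real" where "vel1 u = u $ 2 / u $ 1"
definition vel2 :: "state \<Rightarrow> real" where "vel2 u = u $ 3 / u $ 1"
definition E11 :: "state \<Rightarrow> real" where "E11 u = u $ 4"
definition E12 :: "state \<Rightarrow> real" where "E12 u = u $ 5"
definition E22 :: "state \<Rightarrow> real" where "E22 u = u $ 6"

definition p11 :: "state \<Rightarrow> real" where "p11 u = 2 * E11 u - rho u * vel1 u ^ 2"
definition p12 :: "state \<Rightarrow> real" where "p12 u = 2 * E12 u - rho u * vel1 u * vel2 u"
definition p22 :: "state \<Rightarrow> real" where "p22 u = 2 * E22 u - rho u * vel2 u ^ 2"

definition admissible :: "state \<Rightarrow> bool" where
  "admissible u \<longleftrightarrow> rho u > 0 \<and>
     (\<forall>a b :: real. (a, b) \<noteq> (0, 0) \<longrightarrow>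
        p11 u * a^2 + 2 * p12 u * a * b + p22 u * b^2 > 0)"

definition fluxf :: "state \<Rightarrow> state" where
  "fluxf u = vector
     [ rho u * vel1 u,
       rho u * vel1 u ^ 2 + p11 u,
       rho u * vel1 u * vel2 u + p12 u,
       (E11 u + p11 u) * vel1 u,
       E12 u * vel1 u + (p11 u * vel2 u + p12 u * vel1 u) / 2,
       E22 u * vel1 u + p12 u * vel2 u ]"

definition fluxg :: "state \<Rightarrow> state" where
  "fluxg u = vector
     [ rho u * vel2 u,
       rho u * vel1 u * vel2 u + p12 u,
       rho u * vel2 u ^ 2 + p22 u,
       E11 u * vel2 u + p12 u * vel1 u,
       E12 u * vel2 u + (p12 u * vel2 u + p22 u * vel1 u) / 2,
       (E22 u + p22 u) * vel2 u ]"

definition alphax :: "state \<Rightarrow> real" where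
  "alphax u = \<bar>vel1 u\<bar> + sqrt (3 * p11 u / rho u)"
definition alphay :: "state \<Rightarrow> real" where
  "alphay u = \<bar>vel2 u\<bar> + sqrt (3 * p22 u / rho u)"

definition wxplus :: "state \<Rightarrow> state" where
  "wxplus u = (1/2) *\<^sub>R (u + (1 / alphax u) *\<^sub>R fluxf u)"
definition wxminus :: "state \<Rightarrow> state" where
  "wxminus u = (1/2) *\<^sub>R (u - (1 / alphax u) *\<^sub>R fluxf u)"
definition wyplus :: "state \<Rightarrow> state" where
  "wyplus u = (1/2) *\<^sub>R (u + (1 / alphay u) *\<^sub>R fluxg u)"
definition wyminus :: "state \<Rightarrow> state" where
  "wyminus u = (1/2) *\<^sub>R (u - (1 / alphay u) *\<^sub>R fluxg u)"

text \<open>Normalized end-point weight of the N-point Gauss--Lobatto rule on [0,1]: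
  w_1 = w_N = 1/(N(N-1)) (the rule on [-1,1] has end weights 2/(N(N-1))).\<close>
definition gl_end_weight :: "nat \<Rightarrow> real" where
  "gl_end_weight N = 1 / (real N * (real N - 1))"

text \<open>Mesh data: u i j = u^n_{ij}; wxp i j = w^{x,+}_{i+1/2,j}, wxm i j = w^{x,-}_{i+1/2,j};
  wyp i j = w^{y,+}_{i,j+1/2}, wym i j = w^{y,-}_{i,j+1/2}.\<close>

definition alphax_half :: "(int \<Rightarrow> int \<Rightarrow> state) \<Rightarrow> int \<Rightarrow> int \<Rightarrow> real" where
  "alphax_half u i j = max (alphax (u i j)) (alphax (u (i+1) j))"
definition alphay_half :: "(int \<Rightarrow> int \<Rightarrow> state) \<Rightarrow> int \<Rightarrow> int \<Rightarrow> real" where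
  "alphay_half u i j = max (alphay (u i j)) (alphay (u i (j+1)))"

definition numflux_x :: "(int \<Rightarrow> int \<Rightarrow> state) \<Rightarrow> (int \<Rightarrow> int \<Rightarrow> state) \<Rightarrow> (int \<Rightarrow> int \<Rightarrow> state)
     \<Rightarrow> int \<Rightarrow> int \<Rightarrow> state" where
  "numflux_x u wxp wxm i j = alphax_half u i j *\<^sub>R (wxp i j - wxm i j)"
definition numflux_y :: "(int \<Rightarrow> int \<Rightarrow> state) \<Rightarrow> (int \<Rightarrow> int \<Rightarrow> state) \<Rightarrow> (int \<Rightarrow> int \<Rightarrow> state)
     \<Rightarrow> int \<Rightarrow> int \<Rightarrow> state" where
  "numflux_y u wyp wym i j = alphay_half u i j *\<^sub>R (wyp i j - wym i j)"

definition euler_step ::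
  "real \<Rightarrow> real \<Rightarrow> real \<Rightarrow> (int \<Rightarrow> int \<Rightarrow> state) \<Rightarrow> (int \<Rightarrow> int \<Rightarrow> state) \<Rightarrow> (int \<Rightarrow> int \<Rightarrow> state)
   \<Rightarrow> (int \<Rightarrow> int \<Rightarrow> state) \<Rightarrow> (int \<Rightarrow> int \<Rightarrow> state) \<Rightarrow> int \<Rightarrow> int \<Rightarrow> state" where
  "euler_step dt dx dy u wxp wxm wyp wym i j =
     u i j - (dt / dx) *\<^sub>R (numflux_x u wxp wxm i j - numflux_x u wxp wxm (i-1) j)
           - (dt / dy) *\<^sub>R (numflux_y u wyp wym i j - numflux_y u wyp wym i (j-1))"

end

theory Submission
  imports Defs
begin

text \<open>For a state with positive density the pressure form in a direction (a, b) equals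
  2 (E a, a) - (m, a)^2 / rho, where m is the momentum. In the conservative variables it is
  therefore positively homogeneous and, by (x + y)^2 / (r + s) <= x^2 / r + y^2 / s,
  superadditive: the admissible states form a convex cone. Split the time step between the
  two directions in proportion to (dt/dx) alpha^x and (dt/dy) alpha^y. Since w^+ + w^- = u and
  w^{x,+}_{ij} = (1 - w_1) q^{x,+,*}_{ij} + w_1 w^{x,+}_{i+1/2,j} (similarly for the other three),
  each directional half of the update is a combination of admissible states whose
  coefficients are nonnegative precisely under the CFL condition.\<close>

definition pressure_form :: "state \<Rightarrow> real \<Rightarrow> real \<Rightarrow> real" where
  "pressure_form u a b = p11 u * a\<^sup>2 + 2 * p12 u * a * b + p22 u * b\<^sup>2"

lemma pressure_form_conservative:
  assumes "rho u > 0"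
  shows "pressure_form u a b
       = 2 * (u$4 * a\<^sup>2 + 2 * u$5 * a * b + u$6 * b\<^sup>2) - (u$2 * a + u$3 * b)\<^sup>2 / u$1"
  using assms
  unfolding pressure_form_def p11_def p12_def p22_def rho_def vel1_def vel2_def
    E11_def E12_def E22_def
  by (simp add: field_simps power2_eq_square)

lemma square_sum_divide_le:
  fixes r s x y :: real
  assumes "r > 0" "s > 0"
  shows "(x + y)\<^sup>2 / (r + s) \<le> x\<^sup>2 / r + y\<^sup>2 / s"
proof -
  have "(x + y)\<^sup>2 * (r * s) + (x * s - y * r)\<^sup>2 = (x\<^sup>2 * s + y\<^sup>2 * r) * (r + s)"
    by (simp add: power2_eq_square algebra_simps)
  then have "(x + y)\<^sup>2 * (r * s) \<le> (x\<^sup>2 * s + y\<^sup>2 * r) * (r + s)"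
    using zero_le_power2[of "x * s - y * r"] by linarith
  then show ?thesis
    using assms by (simp add: field_simps)
qed

lemma pressure_form_superadditive:
  assumes "rho x > 0" "rho y > 0"
  shows "pressure_form x a b + pressure_form y a b \<le> pressure_form (x + y) a b"
proof -
  have "rho (x + y) > 0"
    using assms by (simp add: rho_def)
  moreover have "((x$2 * a + x$3 * b) + (y$2 * a + y$3 * b))\<^sup>2 / (x$1 + y$1)
      \<le> (x$2 * a + x$3 * b)\<^sup>2 / x$1 + (y$2 * a + y$3 * b)\<^sup>2 / y$1"
    using assms by (intro square_sum_divide_le) (simp_all add: rho_def)
  ultimately show ?thesis
    using assms by (simp add: pressure_form_conservative algebra_simps)
qed

lemma pressure_form_scaleR:
  assumes "rho x > 0" "c > 0"
  shows "pressure_form (c *\<^sub>R x) a b = c * pressure_form x a b"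
proof -
  have "rho (c *\<^sub>R x) > 0"
    using assms by (simp add: rho_def)
  then have "pressure_form (c *\<^sub>R x) a b
      = 2 * (c * x$4 * a\<^sup>2 + 2 * (c * x$5) * a * b + c * x$6 * b\<^sup>2)
        - (c * x$2 * a + c * x$3 * b)\<^sup>2 / (c * x$1)"
    by (simp add: pressure_form_conservative)
  also have "(c * x$2 * a + c * x$3 * b)\<^sup>2 / (c * x$1) = c * ((x$2 * a + x$3 * b)\<^sup>2 / x$1)"
    using assms by (simp add: rho_def power2_eq_square field_simps)
  also have "2 * (c * x$4 * a\<^sup>2 + 2 * (c * x$5) * a * b + c * x$6 * b\<^sup>2)
        - c * ((x$2 * a + x$3 * b)\<^sup>2 / x$1) = c * pressure_form x a b"
    using assms by (simp add: pressure_form_conservative algebra_simps)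
  finally show ?thesis .
qed

lemma admissible_iff_pressure_form:
  "admissible u \<longleftrightarrow> rho u > 0 \<and> (\<forall>a b. (a, b) \<noteq> (0, 0) \<longrightarrow> pressure_form u a b > 0)"
  unfolding admissible_def pressure_form_def ..

lemma admissible_add:
  assumes "admissible x" "admissible y"
  shows "admissible (x + y)"
  unfolding admissible_iff_pressure_form
proof (intro conjI allI impI)
  have "rho x > 0" "rho y > 0"
    using assms by (simp_all add: admissible_iff_pressure_form)
  then show "rho (x + y) > 0"
    by (simp add: rho_def)
  fix a b :: real
  assume "(a, b) \<noteq> (0, 0)"
  then have "pressure_form x a b > 0" "pressure_form y a b > 0"
    using assms by (simp_all add: admissible_iff_pressure_form)
  then show "pressure_form (x + y) a b > 0"
    using pressure_form_superadditive[OF \<open>rho x > 0\<close> \<open>rho y > 0\<close>, of a b] by linarith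
qed

lemma admissible_scaleR:
  assumes "admissible x" "c > 0"
  shows "admissible (c *\<^sub>R x)"
  using assms pressure_form_scaleR[of x c]
  unfolding admissible_iff_pressure_form
  by (simp add: rho_def)

lemma admissible_add_scaleR_nonneg:
  assumes "admissible x" "admissible y" "c \<ge> 0"
  shows "admissible (x + c *\<^sub>R y)"
  using assms admissible_add admissible_scaleR
  by (cases "c = 0") auto

lemma admissible_p11_pos:
  assumes "admissible u"
  shows "p11 u > 0"
proof -
  have "pressure_form u 1 0 > 0"
    using assms by (simp add: admissible_iff_pressure_form)
  then show ?thesis
    by (simp add: pressure_form_def)
qed

lemma admissible_p22_pos:
  assumes "admissible u"
  shows "p22 u > 0"
proof -
  have "pressure_form u 0 1 > 0"
    using assms by (simp add: admissible_iff_pressure_form)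
  then show ?thesis
    by (simp add: pressure_form_def)
qed

lemma alphax_pos: "admissible u \<Longrightarrow> alphax u > 0"
  using admissible_p11_pos[of u] unfolding alphax_def admissible_def
  by (simp add: add_nonneg_pos)

lemma alphay_pos: "admissible u \<Longrightarrow> alphay u > 0"
  using admissible_p22_pos[of u] unfolding alphay_def admissible_def
  by (simp add: add_nonneg_pos)

lemma wxplus_add_wxminus: "wxplus u + wxminus u = u"
  unfolding wxplus_def wxminus_def by (simp add: algebra_simps flip: scaleR_2)

lemma wyplus_add_wyminus: "wyplus u + wyminus u = u"
  unfolding wyplus_def wyminus_def by (simp add: algebra_simps flip: scaleR_2)

lemma gl_end_weight_bounds:
  assumes "N \<ge> 2"
  shows "0 < gl_end_weight N" "gl_end_weight N < 1"
proof -
  have "real N * (real N - 1) \<ge> 2 * 1"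
    using assms by (intro mult_mono) auto
  then show "0 < gl_end_weight N" "gl_end_weight N < 1"
    by (simp_all add: gl_end_weight_def)
qed

lemma max_le_SUP_pairs:
  fixes f :: "'a \<Rightarrow> 'b \<Rightarrow> real"
  assumes "bdd_above (range (\<lambda>(i, j). f i j))"
  shows "max (f i j) (f k l) \<le> (SUP (i, j). f i j)"
  using cSUP_upper[OF UNIV_I assms, of "(i, j)"] cSUP_upper[OF UNIV_I assms, of "(k, l)"]
  by simp

lemma cfl_split:
  fixes a b W :: real
  assumes "a > 0" "b > 0" "a + b \<le> W"
  obtains s where "0 < s" "s < 1" "a \<le> s * W" "b \<le> (1 - s) * W"
proof
  let ?s = "a / (a + b)"
  show "0 < ?s" "?s < 1"
    using assms by simp_all
  have "a * (a + b) \<le> a * W" "b * (a + b) \<le> b * W"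
    using assms by simp_all
  then show "a \<le> ?s * W" "b \<le> (1 - ?s) * W"
    using assms by (simp_all add: field_simps)
qed

lemma alphax_half_bounds:
  assumes "\<forall>i j. admissible (u i j)" "bdd_above (range (\<lambda>(i, j). alphax (u i j)))"
  shows "0 < alphax_half u i j" "alphax_half u i j \<le> (SUP (i, j). alphax (u i j))"
  using assms alphax_pos max_le_SUP_pairs[of "\<lambda>i j. alphax (u i j)"]
  by (auto simp: alphax_half_def less_max_iff_disj)

lemma alphay_half_bounds:
  assumes "\<forall>i j. admissible (u i j)" "bdd_above (range (\<lambda>(i, j). alphay (u i j)))"
  shows "0 < alphay_half u i j" "alphay_half u i j \<le> (SUP (i, j). alphay (u i j))"
  using assms alphay_pos max_le_SUP_pairs[of "\<lambda>i j. alphay (u i j)"]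
  by (auto simp: alphay_half_def less_max_iff_disj)

lemma admissible_directional_update:
  fixes wp wm pR mR pL mL :: state
  assumes W: "0 < W" "W < 1" and t: "0 < t" and lam: "0 \<le> lam"
    and aR: "0 \<le> aR" "aR \<le> S" and aL: "0 \<le> aL" "aL \<le> S" and cfl: "lam * S \<le> t * W"
    and adm_qp: "admissible ((1 / (1 - W)) *\<^sub>R (wp - W *\<^sub>R pR))"
    and adm_qm: "admissible ((1 / (1 - W)) *\<^sub>R (wm - W *\<^sub>R mL))"
    and adm: "admissible pR" "admissible mR" "admissible pL" "admissible mL"
  shows "admissible (t *\<^sub>R (wp + wm) - lam *\<^sub>R (aR *\<^sub>R (pR - mR) - aL *\<^sub>R (pL - mL)))"
proof -
  define qp where "qp = (1 / (1 - W)) *\<^sub>R (wp - W *\<^sub>R pR)"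
  define qm where "qm = (1 / (1 - W)) *\<^sub>R (wm - W *\<^sub>R mL)"
  have wp: "wp = (1 - W) *\<^sub>R qp + W *\<^sub>R pR" and wm: "wm = (1 - W) *\<^sub>R qm + W *\<^sub>R mL"
    using W by (simp_all add: qp_def qm_def)
  have "t *\<^sub>R (wp + wm) - lam *\<^sub>R (aR *\<^sub>R (pR - mR) - aL *\<^sub>R (pL - mL))
      = (t * (1 - W)) *\<^sub>R (qp + qm) + (t * W - lam * aR) *\<^sub>R pR + (t * W - lam * aL) *\<^sub>R mL
        + (lam * aR) *\<^sub>R mR + (lam * aL) *\<^sub>R pL"
    by (subst wp, subst wm) (simp add: algebra_simps)
  moreover have "lam * aR \<le> t * W" "lam * aL \<le> t * W"
    using lam aR aL cfl by (meson mult_left_mono order_trans)+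
  moreover have "admissible ((t * (1 - W)) *\<^sub>R (qp + qm))"
    using adm_qp adm_qm W t by (simp add: qp_def qm_def admissible_add admissible_scaleR)
  ultimately show ?thesis
    using adm lam aR aL by (simp add: admissible_add_scaleR_nonneg)
qed

theorem theorem4:
  fixes u wxp wxm wyp wym :: "int \<Rightarrow> int \<Rightarrow> real ^ 6"
    and dt dx dy :: real and N :: nat
  assumes N: "N \<ge> 4"
    and pos: "dt > 0" "dx > 0" "dy > 0"
    and bdd: "bdd_above (range (\<lambda>(i, j). alphax (u i j)))"
             "bdd_above (range (\<lambda>(i, j). alphay (u i j)))"
    and adm_u: "\<forall>i j. admissible (u i j)"
    and adm_x: "\<forall>i j.
        admissible ((1 / (1 - gl_end_weight N)) *\<^sub>R
                      (wxplus (u i j) - gl_end_weight N *\<^sub>R wxp i j))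
      \<and> admissible ((1 / (1 - gl_end_weight N)) *\<^sub>R
                      (wxminus (u i j) - gl_end_weight N *\<^sub>R wxm (i - 1) j))
      \<and> admissible (wxp i j) \<and> admissible (wxm i j)"
    and adm_y: "\<forall>i j.
        admissible ((1 / (1 - gl_end_weight N)) *\<^sub>R
                      (wyplus (u i j) - gl_end_weight N *\<^sub>R wyp i j))
      \<and> admissible ((1 / (1 - gl_end_weight N)) *\<^sub>R
                      (wyminus (u i j) - gl_end_weight N *\<^sub>R wym i (j - 1)))
      \<and> admissible (wyp i j) \<and> admissible (wym i j)"
    and cfl: "((SUP (i, j). alphax (u i j)) / dx + (SUP (i, j). alphay (u i j)) / dy) * dt
                \<le> gl_end_weight N"
  shows "\<forall>i j. admissible (euler_step dt dx dy u wxp wxm wyp wym i j)"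
proof (intro allI)
  fix i j
  define Sx where "Sx = (SUP (i, j). alphax (u i j))"
  define Sy where "Sy = (SUP (i, j). alphay (u i j))"
  note ax = alphax_half_bounds[OF adm_u bdd(1), folded Sx_def]
  note ay = alphay_half_bounds[OF adm_u bdd(2), folded Sy_def]
  have "0 < dt / dx * Sx" "0 < dt / dy * Sy"
    using pos ax[of i j] ay[of i j] by simp_all
  moreover have "dt / dx * Sx + dt / dy * Sy \<le> gl_end_weight N"
    using cfl by (simp add: Sx_def Sy_def algebra_simps)
  ultimately obtain s where s: "0 < s" "s < 1"
    "dt / dx * Sx \<le> s * gl_end_weight N" "dt / dy * Sy \<le> (1 - s) * gl_end_weight N"
    by (rule cfl_split)
  note W = gl_end_weight_bounds[of N]
  have "euler_step dt dx dy u wxp wxm wyp wym i j =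
      (s *\<^sub>R (wxplus (u i j) + wxminus (u i j)) - (dt / dx) *\<^sub>R
        (alphax_half u i j *\<^sub>R (wxp i j - wxm i j)
         - alphax_half u (i - 1) j *\<^sub>R (wxp (i - 1) j - wxm (i - 1) j)))
    + ((1 - s) *\<^sub>R (wyplus (u i j) + wyminus (u i j)) - (dt / dy) *\<^sub>R
        (alphay_half u i j *\<^sub>R (wyp i j - wym i j)
         - alphay_half u i (j - 1) *\<^sub>R (wyp i (j - 1) - wym i (j - 1))))"
    unfolding wxplus_add_wxminus wyplus_add_wyminus euler_step_def numflux_x_def numflux_y_def
    by (simp add: algebra_simps)
  also have "admissible \<dots>"
    using N pos s W ax ay adm_x adm_y
    by (intro admissible_add admissible_directional_update) (auto intro: less_imp_le)
  finally show "admissible (euler_step dt dx dy u wxp wxm wyp wym i j)" .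
qed

end
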